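(* For any metric space $(X,d)$, any $x_0\in X$ and $n\geq 1$, the function $\rho:\pi_n(X,x_0)\times\pi_n(X,x_0)\to[0,\infty)$ is a pseudometric on $\pi_n(X,x_0)$.
   Context: $\Omega^n(X,x_0)$ is the set of continuous maps $\alpha:[0,1]^n\to X$ with $\alpha(\partial[0,1]^n)=\{x_0\}$, with uniform metric $\mu(\alpha,\beta)=\sup_{t\in[0,1]^n}d(\alpha(t),\beta(t))$. For $a,b\in\pi_n(X,x_0)$, $\rho(a,b)=\inf\{\mu(\alpha,\beta)\mid\alpha\in a,\beta\in b\}$. *)

theory Defs
  imports "HOL-Analysis.Analysis"
begin

text \<open>The unit cube [0,1]^n, realised inside nat => real (product topology),
  with coordinates i >= n fixed to 0.\<close>
definition unit_cube :: "nat \<Rightarrow> (nat \<Rightarrow> real) set" where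
  "unit_cube n = {t. (\<forall>i<n. 0 \<le> t i \<and> t i \<le> 1) \<and> (\<forall>i\<ge>n. t i = 0)}"

definition cube_boundary :: "nat \<Rightarrow> (nat \<Rightarrow> real) set" where
  "cube_boundary n = {t \<in> unit_cube n. \<exists>i<n. t i = 0 \<or> t i = 1}"

definition cube_top :: "nat \<Rightarrow> (nat \<Rightarrow> real) topology" where
  "cube_top n = subtopology euclidean (unit_cube n)"

definition Omega :: "nat \<Rightarrow> 'a set \<Rightarrow> ('a \<Rightarrow> 'a \<Rightarrow> real) \<Rightarrow> 'a \<Rightarrow> ((nat \<Rightarrow> real) \<Rightarrow> 'a) set" where
  "Omega n M d x0 = {\<alpha>. continuous_map (cube_top n) (Metric_space.mtopology M d) \<alpha>
                        \<and> (\<forall>t\<in>cube_boundary n. \<alpha> t = x0)}"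

definition rel_homotopic :: "nat \<Rightarrow> 'a set \<Rightarrow> ('a \<Rightarrow> 'a \<Rightarrow> real) \<Rightarrow> 'a \<Rightarrow> ((nat \<Rightarrow> real) \<Rightarrow> 'a) rel" where
  "rel_homotopic n M d x0 = {(\<alpha>, \<beta>). \<alpha> \<in> Omega n M d x0 \<and> \<beta> \<in> Omega n M d x0 \<and>
      homotopic_with (\<lambda>h. \<forall>t\<in>cube_boundary n. h t = x0) (cube_top n) (Metric_space.mtopology M d) \<alpha> \<beta>}"

definition homotopy_group_set :: "nat \<Rightarrow> 'a set \<Rightarrow> ('a \<Rightarrow> 'a \<Rightarrow> real) \<Rightarrow> 'a \<Rightarrow> ((nat \<Rightarrow> real) \<Rightarrow> 'a) set set" where
  "homotopy_group_set n M d x0 = Omega n M d x0 // rel_homotopic n M d x0"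

definition unif_dist :: "nat \<Rightarrow> ('a \<Rightarrow> 'a \<Rightarrow> real) \<Rightarrow> ((nat \<Rightarrow> real) \<Rightarrow> 'a) \<Rightarrow> ((nat \<Rightarrow> real) \<Rightarrow> 'a) \<Rightarrow> real" where
  "unif_dist n d \<alpha> \<beta> = (SUP t\<in>unit_cube n. d (\<alpha> t) (\<beta> t))"

definition rho :: "nat \<Rightarrow> ('a \<Rightarrow> 'a \<Rightarrow> real) \<Rightarrow> ((nat \<Rightarrow> real) \<Rightarrow> 'a) set \<Rightarrow> ((nat \<Rightarrow> real) \<Rightarrow> 'a) set \<Rightarrow> real" where
  "rho n d a b = Inf {unif_dist n d \<alpha> \<beta> | \<alpha> \<beta>. \<alpha> \<in> a \<and> \<beta> \<in> b}"

definition pseudometric_on :: "'b set \<Rightarrow> ('b \<Rightarrow> 'b \<Rightarrow> real) \<Rightarrow> bool" where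
  "pseudometric_on S f \<longleftrightarrow>
     (\<forall>x\<in>S. \<forall>y\<in>S. 0 \<le> f x y) \<and>
     (\<forall>x\<in>S. f x x = 0) \<and>
     (\<forall>x\<in>S. \<forall>y\<in>S. f x y = f y x) \<and>
     (\<forall>x\<in>S. \<forall>y\<in>S. \<forall>z\<in>S. f x z \<le> f x y + f y z)"

end

theory Submission
  imports Defs
begin

text \<open>
  Nonnegativity, symmetry and \<open>\<rho>(a, a) = 0\<close> are inherited directly from the uniform
  distance \<open>\<mu>\<close>. For the triangle inequality take \<open>\<alpha> \<in> a\<close>, \<open>\<beta>, \<beta>' \<in> b\<close> and \<open>\<gamma> \<in> c\<close>.
  Concatenating along the first coordinate, \<open>\<alpha> \<cdot> \<beta>\<inverse> \<cdot> \<beta>'\<close> is homotopic to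
  \<open>\<alpha> \<cdot> \<beta>\<inverse> \<cdot> \<beta> \<simeq> \<alpha>\<close> and \<open>\<beta> \<cdot> \<beta>\<inverse> \<cdot> \<gamma> \<simeq> \<gamma>\<close> (rel boundary), so these maps represent \<open>a\<close>
  and \<open>c\<close>. They agree on the middle third of the cube, and on the outer thirds they
  are rescaled copies of the pairs \<open>(\<alpha>, \<beta>)\<close> and \<open>(\<beta>', \<gamma>)\<close>. Hence
  \<open>\<rho>(a, c) \<le> max (\<mu>(\<alpha>, \<beta>)) (\<mu>(\<beta>', \<gamma>)) \<le> \<mu>(\<alpha>, \<beta>) + \<mu>(\<beta>', \<gamma>)\<close>, and taking infima gives
  \<open>\<rho>(a, c) \<le> \<rho>(a, b) + \<rho>(b, c)\<close>.
\<close>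

declare homotopic_with_trans [trans]

abbreviation homotopic_cubes ::
  "nat \<Rightarrow> 'a topology \<Rightarrow> 'a \<Rightarrow> ((nat \<Rightarrow> real) \<Rightarrow> 'a) \<Rightarrow> ((nat \<Rightarrow> real) \<Rightarrow> 'a) \<Rightarrow> bool"
  where "homotopic_cubes n Y x0 \<equiv> homotopic_with (\<lambda>h. \<forall>t\<in>cube_boundary n. h t = x0) (cube_top n) Y"

definition based_cube_map :: "nat \<Rightarrow> 'a topology \<Rightarrow> 'a \<Rightarrow> ((nat \<Rightarrow> real) \<Rightarrow> 'a) \<Rightarrow> bool" where
  "based_cube_map n Y x0 f \<longleftrightarrow> continuous_map (cube_top n) Y f \<and> (\<forall>t\<in>cube_boundary n. f t = x0)"

definition on_side_face :: "nat \<Rightarrow> (nat \<Rightarrow> real) \<Rightarrow> bool" where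
  "on_side_face n t \<longleftrightarrow> (\<exists>i<n. i \<noteq> 0 \<and> (t i = 0 \<or> t i = 1))"

section \<open>The unit cube\<close>

lemma on_side_face_upd0 [simp]: "on_side_face n (t(0 := s)) \<longleftrightarrow> on_side_face n t"
  unfolding on_side_face_def by auto

lemma unit_cube_coord0: "0 < n \<Longrightarrow> t \<in> unit_cube n \<Longrightarrow> 0 \<le> t 0 \<and> t 0 \<le> 1"
  by (simp add: unit_cube_def)

lemma unit_cube_upd0 [simp]:
  "0 < n \<Longrightarrow> t \<in> unit_cube n \<Longrightarrow> t(0 := s) \<in> unit_cube n \<longleftrightarrow> 0 \<le> s \<and> s \<le> 1"
  by (auto simp: unit_cube_def)

lemma cube_boundary_iff:
  "0 < n \<Longrightarrow> t \<in> cube_boundary n \<longleftrightarrow> t \<in> unit_cube n \<and> (t 0 = 0 \<or> t 0 = 1 \<or> on_side_face n t)"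
  by (auto simp: cube_boundary_def on_side_face_def)

lemma topspace_cube_top [simp]: "topspace (cube_top n) = unit_cube n"
  by (simp add: cube_top_def)

lemma compactin_unit_cube: "compactin (cube_top n) (unit_cube n)"
proof -
  have "unit_cube n = PiE UNIV (\<lambda>i. if i < n then {0..1} else {0})"
    unfolding unit_cube_def PiE_iff by (auto split: if_split_asm)
  then have "compactin euclidean (unit_cube n)"
    by (simp add: compactin_PiE flip: euclidean_product_topology)
  then show ?thesis
    by (simp add: cube_top_def compactin_subtopology)
qed

lemma continuous_on_fun_upd [continuous_intros]:
  fixes f :: "'a::topological_space \<Rightarrow> 'b \<Rightarrow> 'c::topological_space"
  assumes "continuous_on S f" and "continuous_on S e"
  shows "continuous_on S (\<lambda>x. (f x)(i := e x))"
proof (intro continuous_on_coordinatewise_then_product)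
  fix j
  show "continuous_on S (\<lambda>x. ((f x)(i := e x)) j)"
    using assms by (cases "j = i") (simp_all add: continuous_on_product_then_coordinatewise)
qed

lemma continuous_on_coordinate [continuous_intros]: "continuous_on S (\<lambda>x. x i)"
  by (rule continuous_on_subset[OF continuous_on_product_coordinates]) simp

lemma continuous_on_snd_apply [continuous_intros]:
  "continuous_on S f \<Longrightarrow> continuous_on S (\<lambda>x. snd (f x) i)"
  by (rule continuous_on_product_then_coordinatewise[OF continuous_on_snd])

lemma continuous_map_top_of_set_compose:
  assumes "continuous_map (top_of_set T) Y f" and "continuous_on S g" and "g ` S \<subseteq> T"
  shows "continuous_map (top_of_set S) Y (\<lambda>x. f (g x))"
proof -
  have "continuous_map (top_of_set S) (top_of_set T) g"
    using assms(2,3) by (auto simp: continuous_map_in_subtopology)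
  from continuous_map_compose[OF this assms(1)] show ?thesis
    by (simp add: o_def)
qed

section \<open>Homotopies of cube maps\<close>

text \<open>
  A homotopy is written in curried form \<open>F u t\<close>, with \<open>u\<close> the time parameter and \<open>t\<close> the
  point of the cube, so that its ends are simply \<open>F 0\<close> and \<open>F 1\<close>.
\<close>

lemma continuous_map_snd_cube:
  assumes "continuous_map (cube_top n) Y f"
  shows "continuous_map (top_of_set ({0..1} \<times> unit_cube n)) Y (\<lambda>p. f (snd p))"
proof -
  have "continuous_map (prod_topology (top_of_set {0..1}) (cube_top n)) Y (f \<circ> snd)"
    using assms by (simp add: continuous_map_of_snd)
  then show ?thesis
    by (simp add: cube_top_def o_def)
qed

lemma continuous_map_reparam0:
  fixes F :: "real \<Rightarrow> (nat \<Rightarrow> real) \<Rightarrow> 'a"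
  assumes "continuous_map (top_of_set ({0..1} \<times> unit_cube n)) Y (\<lambda>p. F (fst p) (snd p))" and "0 < n"
    and "S \<subseteq> {0..1} \<times> unit_cube n" and "continuous_on S e"
    and "\<And>p. p \<in> S \<Longrightarrow> 0 \<le> e p \<and> e p \<le> 1"
  shows "continuous_map (top_of_set S) Y (\<lambda>p. F (fst p) ((snd p)(0 := e p)))"
proof -
  have "continuous_on S (\<lambda>p. (fst p, (snd p)(0 := e p)))"
    by (intro continuous_intros assms(4))
  moreover have "(\<lambda>p. (fst p, (snd p)(0 := e p))) ` S \<subseteq> {0..1} \<times> unit_cube n"
    using assms(2,3,5) by (auto simp: subset_iff)
  ultimately have "continuous_map (top_of_set S) Y
      (\<lambda>p. (\<lambda>q. F (fst q) (snd q)) (fst p, (snd p)(0 := e p)))"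
    by (rule continuous_map_top_of_set_compose[OF assms(1)])
  then show ?thesis
    by simp
qed

lemma continuous_map_cube_reparam0:
  fixes e :: "real \<times> (nat \<Rightarrow> real) \<Rightarrow> real"
  assumes "continuous_map (cube_top n) Y f" and "0 < n" and "continuous_on ({0..1} \<times> unit_cube n) e"
    and "\<And>u t. u \<in> {0..1} \<Longrightarrow> t \<in> unit_cube n \<Longrightarrow> 0 \<le> e (u, t) \<and> e (u, t) \<le> 1"
  shows "continuous_map (top_of_set ({0..1} \<times> unit_cube n)) Y (\<lambda>p. f ((snd p)(0 := e p)))"
  using assms(4)
  by (intro continuous_map_reparam0[where F = "\<lambda>_. f", OF continuous_map_snd_cube[OF assms(1)] assms(2)
        subset_refl assms(3)]) auto

lemma continuous_map_cases_coord0: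
  fixes S :: "('b::topological_space \<times> (nat \<Rightarrow> real)) set"
  assumes "continuous_map (top_of_set {p \<in> S. snd p 0 \<le> c}) Y f"
    and "continuous_map (top_of_set {p \<in> S. c \<le> snd p 0}) Y g"
    and "\<And>p. p \<in> S \<Longrightarrow> snd p 0 = c \<Longrightarrow> f p = g p"
  shows "continuous_map (top_of_set S) Y (\<lambda>p. if snd p 0 \<le> c then f p else g p)"
proof (rule continuous_map_cases_le)
  have "subtopology (top_of_set S) {p \<in> topspace (top_of_set S). P p} = top_of_set {p \<in> S. P p}" for P
  proof -
    have "S \<inter> {p. p \<in> S \<and> P p} = {p \<in> S. P p}"
      by blast
    then show ?thesis
      by (simp add: subtopology_subtopology)
  qed
  then show "continuous_map (subtopology (top_of_set S) {p \<in> topspace (top_of_set S). snd p 0 \<le> c}) Y f"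
    and "continuous_map (subtopology (top_of_set S) {p \<in> topspace (top_of_set S). c \<le> snd p 0}) Y g"
    using assms(1,2) by simp_all
  show "continuous_map (top_of_set S) euclideanreal (\<lambda>p. snd p 0)"
    by (simp add: continuous_on_product_then_coordinatewise continuous_on_snd)
qed (use assms(3) in auto)

lemma homotopic_cubesI:
  fixes F :: "real \<Rightarrow> (nat \<Rightarrow> real) \<Rightarrow> 'a"
  assumes "continuous_map (top_of_set ({0..1} \<times> unit_cube n)) Y (\<lambda>p. F (fst p) (snd p))"
    and "\<And>u t. u \<in> {0..1} \<Longrightarrow> t \<in> cube_boundary n \<Longrightarrow> F u t = x0"
    and "\<And>t. t \<in> unit_cube n \<Longrightarrow> f t = F 0 t" and "\<And>t. t \<in> unit_cube n \<Longrightarrow> g t = F 1 t"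
  shows "homotopic_cubes n Y x0 f g"
proof (rule homotopic_with_eq)
  show "homotopic_cubes n Y x0 (F 0) (F 1)"
    unfolding homotopic_with_def
    by (intro exI[where x = "\<lambda>p. F (fst p) (snd p)"]) (use assms(1,2) in \<open>auto simp: cube_top_def\<close>)
next
  fix h k :: "(nat \<Rightarrow> real) \<Rightarrow> 'a"
  assume "\<And>t. t \<in> topspace (cube_top n) \<Longrightarrow> h t = k t"
  then show "(\<forall>t\<in>cube_boundary n. h t = x0) \<longleftrightarrow> (\<forall>t\<in>cube_boundary n. k t = x0)"
    by (auto simp: cube_boundary_def)
qed (use assms(3,4) in auto)

lemma homotopic_cubesE:
  assumes "homotopic_cubes n Y x0 f g"
  obtains F :: "real \<Rightarrow> (nat \<Rightarrow> real) \<Rightarrow> 'a"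
  where "continuous_map (top_of_set ({0..1} \<times> unit_cube n)) Y (\<lambda>p. F (fst p) (snd p))"
    and "\<And>u t. u \<in> {0..1} \<Longrightarrow> t \<in> cube_boundary n \<Longrightarrow> F u t = x0"
    and "F 0 = f" and "F 1 = g"
proof -
  obtain H :: "real \<times> (nat \<Rightarrow> real) \<Rightarrow> 'a"
    where "continuous_map (prod_topology (top_of_set {0..1}) (cube_top n)) Y H"
      and "\<And>t. H (0, t) = f t" and "\<And>t. H (1, t) = g t"
      and "\<And>u. u \<in> {0..1} \<Longrightarrow> \<forall>t\<in>cube_boundary n. H (u, t) = x0"
    using assms unfolding homotopic_with_def by blast
  then show thesis
    by (intro that[of "curry H"]) (auto simp: cube_top_def)
qed

section \<open>Concatenation and reversal along the first coordinate\<close>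

definition cube_concat3 ::
  "((nat \<Rightarrow> real) \<Rightarrow> 'a) \<Rightarrow> ((nat \<Rightarrow> real) \<Rightarrow> 'a) \<Rightarrow> ((nat \<Rightarrow> real) \<Rightarrow> 'a) \<Rightarrow> (nat \<Rightarrow> real) \<Rightarrow> 'a" where
  "cube_concat3 f g h t =
     (if t 0 \<le> 1/3 then f (t(0 := 3 * t 0))
      else if t 0 \<le> 2/3 then g (t(0 := 3 * t 0 - 1))
      else h (t(0 := 3 * t 0 - 2)))"

definition cube_reverse :: "((nat \<Rightarrow> real) \<Rightarrow> 'a) \<Rightarrow> (nat \<Rightarrow> real) \<Rightarrow> 'a" where
  "cube_reverse f t = f (t(0 := 1 - t 0))"

lemma continuous_map_concat3_homotopy:
  fixes n :: nat and F G K :: "real \<Rightarrow> (nat \<Rightarrow> real) \<Rightarrow> 'a"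
  defines "D \<equiv> {0..1} \<times> unit_cube n"
  assumes n: "0 < n"
    and F: "continuous_map (top_of_set D) Y (\<lambda>p. F (fst p) (snd p))"
    and G: "continuous_map (top_of_set D) Y (\<lambda>p. G (fst p) (snd p))"
    and K: "continuous_map (top_of_set D) Y (\<lambda>p. K (fst p) (snd p))"
    and FG: "\<And>u t. u \<in> {0..1} \<Longrightarrow> t \<in> unit_cube n \<Longrightarrow> F u (t(0 := 1)) = G u (t(0 := 0))"
    and GK: "\<And>u t. u \<in> {0..1} \<Longrightarrow> t \<in> unit_cube n \<Longrightarrow> G u (t(0 := 1)) = K u (t(0 := 0))"
  shows "continuous_map (top_of_set D) Y (\<lambda>p. cube_concat3 (F (fst p)) (G (fst p)) (K (fst p)) (snd p))"
  unfolding cube_concat3_def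
proof (rule continuous_map_cases_coord0)
  show "continuous_map (top_of_set {p \<in> D. snd p 0 \<le> 1/3}) Y (\<lambda>p. F (fst p) ((snd p)(0 := 3 * snd p 0)))"
    using F unfolding D_def
    by (rule continuous_map_reparam0[OF _ n]; (intro continuous_intros)?; auto dest: unit_cube_coord0[OF n])
  show "continuous_map (top_of_set {p \<in> D. 1/3 \<le> snd p 0}) Y
     (\<lambda>p. if snd p 0 \<le> 2/3 then G (fst p) ((snd p)(0 := 3 * snd p 0 - 1))
          else K (fst p) ((snd p)(0 := 3 * snd p 0 - 2)))"
  proof (rule continuous_map_cases_coord0)
    show "continuous_map (top_of_set {p \<in> {p \<in> D. 1/3 \<le> snd p 0}. snd p 0 \<le> 2/3}) Y
        (\<lambda>p. G (fst p) ((snd p)(0 := 3 * snd p 0 - 1)))"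
      using G unfolding D_def
      by (rule continuous_map_reparam0[OF _ n]; (intro continuous_intros)?; auto dest: unit_cube_coord0[OF n])
    show "continuous_map (top_of_set {p \<in> {p \<in> D. 1/3 \<le> snd p 0}. 2/3 \<le> snd p 0}) Y
        (\<lambda>p. K (fst p) ((snd p)(0 := 3 * snd p 0 - 2)))"
      using K unfolding D_def
      by (rule continuous_map_reparam0[OF _ n]; (intro continuous_intros)?; auto dest: unit_cube_coord0[OF n])
  next
    fix p assume p: "p \<in> {p \<in> D. 1/3 \<le> snd p 0}" and "snd p 0 = 2/3"
    then have "3 * snd p 0 - 1 = 1" and "3 * snd p 0 - 2 = 0"
      by simp_all
    with p show "G (fst p) ((snd p)(0 := 3 * snd p 0 - 1)) = K (fst p) ((snd p)(0 := 3 * snd p 0 - 2))"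
      using GK[of "fst p" "snd p"] by (simp add: D_def mem_Times_iff)
  qed
next
  fix p assume p: "p \<in> D" and "snd p 0 = 1/3"
  then have "3 * snd p 0 = 1" and "3 * snd p 0 - 1 = 0" and "snd p 0 \<le> 2/3"
    by simp_all
  with p show "F (fst p) ((snd p)(0 := 3 * snd p 0)) =
      (if snd p 0 \<le> 2/3 then G (fst p) ((snd p)(0 := 3 * snd p 0 - 1))
       else K (fst p) ((snd p)(0 := 3 * snd p 0 - 2)))"
    using FG[of "fst p" "snd p"] by (simp add: D_def mem_Times_iff)
qed

lemma cube_concat3_boundary:
  assumes "0 < n" and "t \<in> cube_boundary n"
    and "\<And>s. s \<in> unit_cube n \<Longrightarrow> s 0 = 0 \<or> on_side_face n s \<Longrightarrow> f s = x0"
    and "\<And>s. s \<in> unit_cube n \<Longrightarrow> on_side_face n s \<Longrightarrow> g s = x0"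
    and "\<And>s. s \<in> unit_cube n \<Longrightarrow> s 0 = 1 \<or> on_side_face n s \<Longrightarrow> h s = x0"
  shows "cube_concat3 f g h t = x0"
  using assms unit_cube_coord0[OF assms(1)] by (auto simp: cube_boundary_iff cube_concat3_def)

lemma homotopic_cubes_concat3:
  fixes F G K :: "real \<Rightarrow> (nat \<Rightarrow> real) \<Rightarrow> 'a"
  assumes n: "0 < n"
    and F: "continuous_map (top_of_set ({0..1} \<times> unit_cube n)) Y (\<lambda>p. F (fst p) (snd p))"
    and G: "continuous_map (top_of_set ({0..1} \<times> unit_cube n)) Y (\<lambda>p. G (fst p) (snd p))"
    and K: "continuous_map (top_of_set ({0..1} \<times> unit_cube n)) Y (\<lambda>p. K (fst p) (snd p))"
    and FG: "\<And>u t. u \<in> {0..1} \<Longrightarrow> t \<in> unit_cube n \<Longrightarrow> F u (t(0 := 1)) = G u (t(0 := 0))"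
    and GK: "\<And>u t. u \<in> {0..1} \<Longrightarrow> t \<in> unit_cube n \<Longrightarrow> G u (t(0 := 1)) = K u (t(0 := 0))"
    and F_face: "\<And>u t. u \<in> {0..1} \<Longrightarrow> t \<in> unit_cube n \<Longrightarrow> t 0 = 0 \<or> on_side_face n t \<Longrightarrow> F u t = x0"
    and G_face: "\<And>u t. u \<in> {0..1} \<Longrightarrow> t \<in> unit_cube n \<Longrightarrow> on_side_face n t \<Longrightarrow> G u t = x0"
    and K_face: "\<And>u t. u \<in> {0..1} \<Longrightarrow> t \<in> unit_cube n \<Longrightarrow> t 0 = 1 \<or> on_side_face n t \<Longrightarrow> K u t = x0"
    and f: "\<And>t. t \<in> unit_cube n \<Longrightarrow> f t = cube_concat3 (F 0) (G 0) (K 0) t"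
    and g: "\<And>t. t \<in> unit_cube n \<Longrightarrow> g t = cube_concat3 (F 1) (G 1) (K 1) t"
  shows "homotopic_cubes n Y x0 f g"
proof (rule homotopic_cubesI[where F = "\<lambda>u. cube_concat3 (F u) (G u) (K u)"])
  show "continuous_map (top_of_set ({0..1} \<times> unit_cube n)) Y
      (\<lambda>p. cube_concat3 (F (fst p)) (G (fst p)) (K (fst p)) (snd p))"
    by (rule continuous_map_concat3_homotopy[OF n F G K FG GK])
  show "cube_concat3 (F u) (G u) (K u) t = x0" if "u \<in> {0..1}" and "t \<in> cube_boundary n" for u t
    by (rule cube_concat3_boundary[OF n that(2)]) (use F_face G_face K_face that(1) in auto)
qed (use f g in simp_all)

lemma homotopic_cubes_concat3_cong:
  assumes n: "0 < n" and "homotopic_cubes n Y x0 f f'" "homotopic_cubes n Y x0 g g'" "homotopic_cubes n Y x0 h h'"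
  shows "homotopic_cubes n Y x0 (cube_concat3 f g h) (cube_concat3 f' g' h')"
proof -
  obtain F G K :: "real \<Rightarrow> (nat \<Rightarrow> real) \<Rightarrow> 'a"
    where F: "continuous_map (top_of_set ({0..1} \<times> unit_cube n)) Y (\<lambda>p. F (fst p) (snd p))"
      "\<And>u t. u \<in> {0..1} \<Longrightarrow> t \<in> cube_boundary n \<Longrightarrow> F u t = x0" "F 0 = f" "F 1 = f'"
    and G: "continuous_map (top_of_set ({0..1} \<times> unit_cube n)) Y (\<lambda>p. G (fst p) (snd p))"
      "\<And>u t. u \<in> {0..1} \<Longrightarrow> t \<in> cube_boundary n \<Longrightarrow> G u t = x0" "G 0 = g" "G 1 = g'"
    and K: "continuous_map (top_of_set ({0..1} \<times> unit_cube n)) Y (\<lambda>p. K (fst p) (snd p))"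
      "\<And>u t. u \<in> {0..1} \<Longrightarrow> t \<in> cube_boundary n \<Longrightarrow> K u t = x0" "K 0 = h" "K 1 = h'"
    using assms(2-4) by (elim homotopic_cubesE) (rule that)
  have faces: "t(0 := 0) \<in> cube_boundary n" "t(0 := 1) \<in> cube_boundary n" if "t \<in> unit_cube n" for t
    using that n by (simp_all add: cube_boundary_iff)
  show ?thesis
  proof (rule homotopic_cubes_concat3[OF n F(1) G(1) K(1)])
    fix u t assume u: "u \<in> {0..1::real}" and t: "t \<in> unit_cube n"
    show "F u (t(0 := 1)) = G u (t(0 := 0))" and "G u (t(0 := 1)) = K u (t(0 := 0))"
      using F(2) G(2) K(2) u faces[OF t] by simp_all
    show "F u t = x0" if "t 0 = 0 \<or> on_side_face n t"
      using F(2) u t that by (auto simp: cube_boundary_iff[OF n])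
    show "G u t = x0" if "on_side_face n t"
      using G(2) u t that by (auto simp: cube_boundary_iff[OF n])
    show "K u t = x0" if "t 0 = 1 \<or> on_side_face n t"
      using K(2) u t that by (auto simp: cube_boundary_iff[OF n])
  qed (simp_all add: F(3,4) G(3,4) K(3,4))
qed

lemma homotopic_cubes_reparam0:
  fixes \<phi> :: "real \<Rightarrow> real"
  assumes n: "0 < n" and f: "based_cube_map n Y x0 f"
    and \<phi>: "continuous_on {0..1} \<phi>" "\<phi> ` {0..1} \<subseteq> {0..1}" "\<phi> 0 = 0" "\<phi> 1 = 1"
  shows "homotopic_cubes n Y x0 (\<lambda>t. f (t(0 := \<phi> (t 0)))) f"
proof -
  define D where "D = {0..1::real} \<times> unit_cube n"
  define e where "e u t = (1 - u) * \<phi> (t 0) + u * t 0" for u and t :: "nat \<Rightarrow> real"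
  have e_01: "0 \<le> e u t \<and> e u t \<le> 1" if "u \<in> {0..1}" and "t \<in> unit_cube n" for u t
  proof -
    have "t 0 \<in> {0..1}"
      using that(2) unit_cube_coord0[OF n] by simp
    moreover from this have "\<phi> (t 0) \<in> {0..1}"
      using \<phi>(2) by blast
    ultimately show ?thesis
      using convexD_alt[of "{0..1::real}" "\<phi> (t 0)" "t 0" u] that(1) by (simp add: e_def)
  qed
  have "continuous_on D (\<lambda>p. \<phi> (snd p 0))"
  proof (rule continuous_on_compose2[OF \<phi>(1)])
    show "continuous_on D (\<lambda>p. snd p 0)"
      by (intro continuous_intros)
    show "(\<lambda>p. snd p 0) ` D \<subseteq> {0..1}"
      using unit_cube_coord0[OF n] by (auto simp: D_def)
  qed
  then have e_cont: "continuous_on D (\<lambda>p. e (fst p) (snd p))"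
    unfolding e_def by (intro continuous_intros)
  show ?thesis
  proof (rule homotopic_cubesI[where F = "\<lambda>u t. f (t(0 := e u t))"])
    have "continuous_map (cube_top n) Y f"
      using f by (simp add: based_cube_map_def)
    then show "continuous_map (top_of_set ({0..1} \<times> unit_cube n)) Y (\<lambda>p. f ((snd p)(0 := e (fst p) (snd p))))"
      by (rule continuous_map_cube_reparam0[OF _ n]) (use e_cont e_01 in \<open>auto simp: D_def\<close>)
    show "f (t(0 := e u t)) = x0" if "u \<in> {0..1}" and "t \<in> cube_boundary n" for u t
    proof -
      have "t \<in> unit_cube n" and "t 0 = 0 \<or> t 0 = 1 \<or> on_side_face n t"
        using that(2) by (simp_all add: cube_boundary_iff[OF n])
      then have "t(0 := e u t) \<in> cube_boundary n"
        using n e_01 that(1) \<phi>(3,4) by (auto simp: cube_boundary_iff e_def)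
      then show ?thesis
        using f by (simp add: based_cube_map_def)
    qed
  qed (simp_all add: e_def)
qed

lemma based_cube_map_reverse:
  assumes "0 < n" and "based_cube_map n Y x0 f"
  shows "based_cube_map n Y x0 (cube_reverse f)"
  unfolding based_cube_map_def
proof
  show "continuous_map (cube_top n) Y (cube_reverse f)"
    unfolding cube_top_def cube_reverse_def
  proof (rule continuous_map_top_of_set_compose[where T = "unit_cube n"])
    show "continuous_map (top_of_set (unit_cube n)) Y f"
      using assms(2) by (simp add: based_cube_map_def cube_top_def)
    show "continuous_on (unit_cube n) (\<lambda>t. t(0 := 1 - t 0))"
      by (intro continuous_on_fun_upd continuous_intros)
    show "(\<lambda>t. t(0 := 1 - t 0)) ` unit_cube n \<subseteq> unit_cube n"
      using assms(1) unit_cube_coord0[OF assms(1)] by auto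
  qed
  show "\<forall>t\<in>cube_boundary n. cube_reverse f t = x0"
    using assms unit_cube_coord0[OF assms(1)]
    by (auto simp: based_cube_map_def cube_reverse_def cube_boundary_iff)
qed

lemma homotopic_cubes_concat3_reverse_right_collapse:
  assumes n: "0 < n" and f: "based_cube_map n Y x0 f" and g: "based_cube_map n Y x0 g"
  shows "homotopic_cubes n Y x0 (cube_concat3 f (cube_reverse g) g) (\<lambda>t. f (t(0 := min 1 (3 * t 0))))"
proof -
  have cf: "continuous_map (cube_top n) Y f" and cg: "continuous_map (cube_top n) Y g"
    and f_bd: "\<And>s. s \<in> cube_boundary n \<Longrightarrow> f s = x0" and g_bd: "\<And>s. s \<in> cube_boundary n \<Longrightarrow> g s = x0"
    using f g by (simp_all add: based_cube_map_def)
  \<comment> \<open>The last two thirds are pushed onto the face \<open>t 0 = 1\<close>, where they are constant.\<close>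
  show ?thesis
  proof (rule homotopic_cubes_concat3[OF n, where F = "\<lambda>u. f"
        and G = "\<lambda>u t. g (t(0 := max (1 - t 0) u))" and K = "\<lambda>u t. g (t(0 := max (t 0) u))"])
    show "continuous_map (top_of_set ({0..1} \<times> unit_cube n)) Y (\<lambda>p. f (snd p))"
      by (rule continuous_map_snd_cube[OF cf])
    show "continuous_map (top_of_set ({0..1} \<times> unit_cube n)) Y (\<lambda>p. g ((snd p)(0 := max (1 - snd p 0) (fst p))))"
      and "continuous_map (top_of_set ({0..1} \<times> unit_cube n)) Y (\<lambda>p. g ((snd p)(0 := max (snd p 0) (fst p))))"
      by (rule continuous_map_cube_reparam0[OF cg n], intro continuous_intros, auto dest: unit_cube_coord0[OF n])+
  next
    fix u t assume u: "u \<in> {0..1::real}" and t: "t \<in> unit_cube n"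
    have t0: "0 \<le> t 0" "t 0 \<le> 1"
      using unit_cube_coord0[OF n t] by simp_all
    show "f (t(0 := 1)) = g ((t(0 := 0))(0 := max (1 - (t(0 := 0)) 0) u))"
      using n u t by (simp add: f_bd g_bd cube_boundary_iff max_absorb1)
    show "g ((t(0 := 1))(0 := max (1 - (t(0 := 1)) 0) u)) = g ((t(0 := 0))(0 := max ((t(0 := 0)) 0) u))"
      by simp
    show "f t = x0" if "t 0 = 0 \<or> on_side_face n t"
      using n that t by (auto simp: f_bd cube_boundary_iff)
    show "g (t(0 := max (1 - t 0) u)) = x0" if "on_side_face n t"
      using n that t t0 u by (simp add: g_bd cube_boundary_iff)
    show "g (t(0 := max (t 0) u)) = x0" if "t 0 = 1 \<or> on_side_face n t"
      using n that t t0 u by (auto simp: g_bd cube_boundary_iff max_def)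
  next
    fix t assume t: "t \<in> unit_cube n"
    have t0: "0 \<le> t 0" "t 0 \<le> 1"
      using unit_cube_coord0[OF n t] by simp_all
    show "cube_concat3 f (cube_reverse g) g t =
        cube_concat3 f (\<lambda>t. g (t(0 := max (1 - t 0) 0))) (\<lambda>t. g (t(0 := max (t 0) 0))) t"
      using t0 by (simp add: cube_concat3_def cube_reverse_def)
    have "f (t(0 := 1)) = x0" and "g (t(0 := 1)) = x0"
      using n t by (simp_all add: f_bd g_bd cube_boundary_iff)
    then show "f (t(0 := min 1 (3 * t 0))) =
        cube_concat3 f (\<lambda>t. g (t(0 := max (1 - t 0) 1))) (\<lambda>t. g (t(0 := max (t 0) 1))) t"
      using t0 by (cases "3 * t 0 = 1") (auto simp: cube_concat3_def min_def max_def)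
  qed
qed

lemma homotopic_cubes_concat3_reverse_right:
  assumes n: "0 < n" and f: "based_cube_map n Y x0 f" and g: "based_cube_map n Y x0 g"
  shows "homotopic_cubes n Y x0 (cube_concat3 f (cube_reverse g) g) f"
proof -
  note homotopic_cubes_concat3_reverse_right_collapse[OF assms]
  also have "homotopic_cubes n Y x0 (\<lambda>t. f (t(0 := min 1 (3 * t 0)))) f"
    by (rule homotopic_cubes_reparam0[OF n f], intro continuous_intros) auto
  finally show ?thesis .
qed

lemma homotopic_cubes_concat3_reverse_left_collapse:
  assumes n: "0 < n" and g: "based_cube_map n Y x0 g" and h: "based_cube_map n Y x0 h"
  shows "homotopic_cubes n Y x0 (cube_concat3 g (cube_reverse g) h) (\<lambda>t. h (t(0 := max 0 (3 * t 0 - 2))))"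
proof -
  have cg: "continuous_map (cube_top n) Y g" and ch: "continuous_map (cube_top n) Y h"
    and g_bd: "\<And>s. s \<in> cube_boundary n \<Longrightarrow> g s = x0" and h_bd: "\<And>s. s \<in> cube_boundary n \<Longrightarrow> h s = x0"
    using g h by (simp_all add: based_cube_map_def)
  \<comment> \<open>The first two thirds are pushed onto the face \<open>t 0 = 0\<close>, where they are constant.\<close>
  show ?thesis
  proof (rule homotopic_cubes_concat3[OF n, where F = "\<lambda>u t. g (t(0 := min (t 0) (1 - u)))"
        and G = "\<lambda>u t. g (t(0 := min (1 - t 0) (1 - u)))" and K = "\<lambda>u. h"])
    show "continuous_map (top_of_set ({0..1} \<times> unit_cube n)) Y (\<lambda>p. g ((snd p)(0 := min (snd p 0) (1 - fst p))))"
      and "continuous_map (top_of_set ({0..1} \<times> unit_cube n)) Y (\<lambda>p. g ((snd p)(0 := min (1 - snd p 0) (1 - fst p))))"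
      by (rule continuous_map_cube_reparam0[OF cg n], intro continuous_intros, auto dest: unit_cube_coord0[OF n])+
    show "continuous_map (top_of_set ({0..1} \<times> unit_cube n)) Y (\<lambda>p. h (snd p))"
      by (rule continuous_map_snd_cube[OF ch])
  next
    fix u t assume u: "u \<in> {0..1::real}" and t: "t \<in> unit_cube n"
    have t0: "0 \<le> t 0" "t 0 \<le> 1"
      using unit_cube_coord0[OF n t] by simp_all
    show "g ((t(0 := 1))(0 := min ((t(0 := 1)) 0) (1 - u))) = g ((t(0 := 0))(0 := min (1 - (t(0 := 0)) 0) (1 - u)))"
      by simp
    show "g ((t(0 := 1))(0 := min (1 - (t(0 := 1)) 0) (1 - u))) = h (t(0 := 0))"
      using n u t by (simp add: g_bd h_bd cube_boundary_iff min_absorb1)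
    show "g (t(0 := min (t 0) (1 - u))) = x0" if "t 0 = 0 \<or> on_side_face n t"
      using n that t t0 u by (auto simp: g_bd cube_boundary_iff min_def)
    show "g (t(0 := min (1 - t 0) (1 - u))) = x0" if "on_side_face n t"
      using n that t t0 u by (simp add: g_bd cube_boundary_iff)
    show "h t = x0" if "t 0 = 1 \<or> on_side_face n t"
      using n that t by (auto simp: h_bd cube_boundary_iff)
  next
    fix t assume t: "t \<in> unit_cube n"
    have t0: "0 \<le> t 0" "t 0 \<le> 1"
      using unit_cube_coord0[OF n t] by simp_all
    show "cube_concat3 g (cube_reverse g) h t =
        cube_concat3 (\<lambda>t. g (t(0 := min (t 0) (1 - 0)))) (\<lambda>t. g (t(0 := min (1 - t 0) (1 - 0)))) h t"
      using t0 by (simp add: cube_concat3_def cube_reverse_def)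
    have "g (t(0 := 0)) = x0" and "h (t(0 := 0)) = x0"
      using n t by (simp_all add: g_bd h_bd cube_boundary_iff)
    then show "h (t(0 := max 0 (3 * t 0 - 2))) =
        cube_concat3 (\<lambda>t. g (t(0 := min (t 0) (1 - 1)))) (\<lambda>t. g (t(0 := min (1 - t 0) (1 - 1)))) h t"
      using t0 by (cases "3 * t 0 = 2") (auto simp: cube_concat3_def min_def max_def)
  qed
qed

lemma homotopic_cubes_concat3_reverse_left:
  assumes n: "0 < n" and g: "based_cube_map n Y x0 g" and h: "based_cube_map n Y x0 h"
  shows "homotopic_cubes n Y x0 (cube_concat3 g (cube_reverse g) h) h"
proof -
  note homotopic_cubes_concat3_reverse_left_collapse[OF assms]
  also have "homotopic_cubes n Y x0 (\<lambda>t. h (t(0 := max 0 (3 * t 0 - 2)))) h"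
    by (rule homotopic_cubes_reparam0[OF n h], intro continuous_intros) auto
  finally show ?thesis .
qed

section \<open>The uniform distance and \<open>\<rho>\<close>\<close>

lemma Omega_iff: "f \<in> Omega n M d x0 \<longleftrightarrow> based_cube_map n (Metric_space.mtopology M d) x0 f"
  by (simp add: Omega_def based_cube_map_def)

lemma rel_homotopic_iff:
  "(f, g) \<in> rel_homotopic n M d x0 \<longleftrightarrow> homotopic_cubes n (Metric_space.mtopology M d) x0 f g"
  by (auto simp: rel_homotopic_def Omega_def dest: homotopic_with_imp_continuous_maps homotopic_with_imp_property)

lemma equiv_rel_homotopic: "equiv (Omega n M d x0) (rel_homotopic n M d x0)"
proof (rule equivI)
  show "rel_homotopic n M d x0 \<subseteq> Omega n M d x0 \<times> Omega n M d x0"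
    by (auto simp: rel_homotopic_def)
  show "refl_on (Omega n M d x0) (rel_homotopic n M d x0)"
    by (auto simp: refl_on_def rel_homotopic_def Omega_def)
  show "sym (rel_homotopic n M d x0)"
    by (auto simp: sym_def rel_homotopic_iff homotopic_with_sym)
  show "trans (rel_homotopic n M d x0)"
    by (auto simp: trans_def rel_homotopic_iff intro: homotopic_with_trans)
qed

lemma homotopy_class_homotopic:
  assumes "a \<in> homotopy_group_set n M d x0" and "\<alpha> \<in> a" and "\<beta> \<in> a"
  shows "homotopic_cubes n (Metric_space.mtopology M d) x0 \<alpha> \<beta>"
  using in_quotient_imp_in_rel[OF equiv_rel_homotopic, where X = a and x = \<alpha> and y = \<beta>] assms
  by (simp add: homotopy_group_set_def rel_homotopic_iff)

lemma homotopy_class_closed: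
  assumes "a \<in> homotopy_group_set n M d x0" and "\<alpha> \<in> a"
    and "homotopic_cubes n (Metric_space.mtopology M d) x0 \<alpha> \<beta>"
  shows "\<beta> \<in> a"
  using in_quotient_imp_closed[OF equiv_rel_homotopic] assms
  by (auto simp: homotopy_group_set_def rel_homotopic_iff)

lemma homotopy_class_subset_Omega: "a \<in> homotopy_group_set n M d x0 \<Longrightarrow> a \<subseteq> Omega n M d x0"
  unfolding homotopy_group_set_def by (rule in_quotient_imp_subset[OF equiv_rel_homotopic])

lemma homotopy_class_nonempty: "a \<in> homotopy_group_set n M d x0 \<Longrightarrow> a \<noteq> {}"
  unfolding homotopy_group_set_def by (rule in_quotient_imp_non_empty[OF equiv_rel_homotopic])

lemma unif_dist_least:
  assumes "\<And>t. t \<in> unit_cube n \<Longrightarrow> d (f t) (g t) \<le> B"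
  shows "unif_dist n d f g \<le> B"
proof -
  have "(\<lambda>_. 0) \<in> unit_cube n"
    by (simp add: unit_cube_def)
  then show ?thesis
    unfolding unif_dist_def by (intro cSUP_least assms) auto
qed

context Metric_space
begin

lemma Omega_in_M: "f \<in> Omega n M d x0 \<Longrightarrow> t \<in> unit_cube n \<Longrightarrow> f t \<in> M"
  by (auto simp: Omega_def image_subset_iff dest!: continuous_map_image_subset_topspace)

lemma bdd_above_dist_image:
  assumes "f \<in> Omega n M d x0" and "g \<in> Omega n M d x0"
  shows "bdd_above ((\<lambda>t. d (f t) (g t)) ` unit_cube n)"
proof -
  have "mbounded (f ` unit_cube n)" and "mbounded (g ` unit_cube n)"
    using assms compactin_imp_mbounded image_compactin[OF compactin_unit_cube] by (auto simp: Omega_def)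
  then have "mbounded (f ` unit_cube n \<union> g ` unit_cube n)"
    by (simp add: mbounded_Un)
  then obtain c B where cB: "f ` unit_cube n \<union> g ` unit_cube n \<subseteq> mcball c B"
    by (auto simp: mbounded_def)
  have "d (f t) (g t) \<le> 2 * B" if "t \<in> unit_cube n" for t
  proof -
    have "f t \<in> mcball c B" and "g t \<in> mcball c B"
      using cB that by auto
    then show ?thesis
      using triangle[of "f t" c "g t"] commute[of "f t" c] by auto
  qed
  then show ?thesis
    by (auto simp: bdd_above_def)
qed

lemma unif_dist_upper:
  assumes "f \<in> Omega n M d x0" and "g \<in> Omega n M d x0" and "t \<in> unit_cube n"
  shows "d (f t) (g t) \<le> unif_dist n d f g"
  unfolding unif_dist_def by (rule cSUP_upper[OF assms(3) bdd_above_dist_image[OF assms(1,2)]])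

lemma unif_dist_nonneg:
  assumes "f \<in> Omega n M d x0" and "g \<in> Omega n M d x0"
  shows "0 \<le> unif_dist n d f g"
proof -
  have "(\<lambda>_. 0) \<in> unit_cube n"
    by (simp add: unit_cube_def)
  with assms show ?thesis
    using unif_dist_upper nonneg order_trans by blast
qed

lemma unif_dist_self: "f \<in> Omega n M d x0 \<Longrightarrow> unif_dist n d f f = 0"
  by (intro antisym unif_dist_least unif_dist_nonneg) (auto dest: Omega_in_M)

lemma unif_dist_commute: "unif_dist n d f g = unif_dist n d g f"
  unfolding unif_dist_def by (metis commute)


lemma unif_dist_concat3_le:
  assumes n: "0 < n" and "f \<in> Omega n M d x0" "f' \<in> Omega n M d x0" "g \<in> Omega n M d x0"
    "g' \<in> Omega n M d x0" "h \<in> Omega n M d x0" "h' \<in> Omega n M d x0"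
  shows "unif_dist n d (cube_concat3 f g h) (cube_concat3 f' g' h')
    \<le> max (unif_dist n d f f') (max (unif_dist n d g g') (unif_dist n d h h'))"
proof (rule unif_dist_least)
  fix t assume t: "t \<in> unit_cube n"
  have "0 \<le> t 0" and "t 0 \<le> 1"
    using unit_cube_coord0[OF n t] by simp_all
  moreover have "d (f s) (f' s) \<le> unif_dist n d f f'" and "d (g s) (g' s) \<le> unif_dist n d g g'"
    and "d (h s) (h' s) \<le> unif_dist n d h h'" if "s \<in> unit_cube n" for s
    using assms(2-7) that by (simp_all add: unif_dist_upper)
  ultimately show "d (cube_concat3 f g h t) (cube_concat3 f' g' h' t)
    \<le> max (unif_dist n d f f') (max (unif_dist n d g g') (unif_dist n d h h'))"
    using n t by (simp add: cube_concat3_def le_max_iff_disj)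
qed

lemma rho_le_unif_dist:
  assumes "a \<in> homotopy_group_set n M d x0" "b \<in> homotopy_group_set n M d x0" "\<alpha> \<in> a" "\<beta> \<in> b"
  shows "rho n d a b \<le> unif_dist n d \<alpha> \<beta>"
  unfolding rho_def
proof (rule cInf_lower)
  show "bdd_below {unif_dist n d \<alpha> \<beta> |\<alpha> \<beta>. \<alpha> \<in> a \<and> \<beta> \<in> b}"
  proof (rule bdd_belowI)
    fix x assume "x \<in> {unif_dist n d \<alpha> \<beta> |\<alpha> \<beta>. \<alpha> \<in> a \<and> \<beta> \<in> b}"
    then obtain \<alpha> \<beta> where "x = unif_dist n d \<alpha> \<beta>" and "\<alpha> \<in> Omega n M d x0" and "\<beta> \<in> Omega n M d x0"
      using homotopy_class_subset_Omega[OF assms(1)] homotopy_class_subset_Omega[OF assms(2)] by blast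
    then show "0 \<le> x"
      by (simp add: unif_dist_nonneg)
  qed
qed (use assms(3,4) in blast)

lemma le_rho:
  assumes "a \<in> homotopy_group_set n M d x0" "b \<in> homotopy_group_set n M d x0"
    and "\<And>\<alpha> \<beta>. \<alpha> \<in> a \<Longrightarrow> \<beta> \<in> b \<Longrightarrow> r \<le> unif_dist n d \<alpha> \<beta>"
  shows "r \<le> rho n d a b"
  unfolding rho_def
proof (rule cInf_greatest)
  obtain \<alpha> \<beta> where "\<alpha> \<in> a" and "\<beta> \<in> b"
    using homotopy_class_nonempty[OF assms(1)] homotopy_class_nonempty[OF assms(2)] by blast
  then show "{unif_dist n d \<alpha> \<beta> |\<alpha> \<beta>. \<alpha> \<in> a \<and> \<beta> \<in> b} \<noteq> {}"
    by blast
qed (use assms(3) in blast)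

lemma rho_nonneg:
  assumes "a \<in> homotopy_group_set n M d x0" and "b \<in> homotopy_group_set n M d x0"
  shows "0 \<le> rho n d a b"
proof (rule le_rho[OF assms])
  fix \<alpha> \<beta> assume "\<alpha> \<in> a" and "\<beta> \<in> b"
  then show "0 \<le> unif_dist n d \<alpha> \<beta>"
    using homotopy_class_subset_Omega[OF assms(1)] homotopy_class_subset_Omega[OF assms(2)]
    by (intro unif_dist_nonneg) auto
qed

lemma rho_self:
  assumes "a \<in> homotopy_group_set n M d x0"
  shows "rho n d a a = 0"
proof -
  obtain \<alpha> where "\<alpha> \<in> a"
    using homotopy_class_nonempty[OF assms] by blast
  then have "rho n d a a \<le> unif_dist n d \<alpha> \<alpha>" and "unif_dist n d \<alpha> \<alpha> = 0"
    using rho_le_unif_dist[OF assms assms] homotopy_class_subset_Omega[OF assms] unif_dist_self by auto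
  then show ?thesis
    using rho_nonneg[OF assms assms] by simp
qed

lemma rho_commute:
  assumes "a \<in> homotopy_group_set n M d x0" and "b \<in> homotopy_group_set n M d x0"
  shows "rho n d a b = rho n d b a"
proof -
  have "rho n d x y \<le> rho n d y x"
    if x: "x \<in> homotopy_group_set n M d x0" and y: "y \<in> homotopy_group_set n M d x0" for x y
  proof (rule le_rho[OF y x])
    fix \<beta> \<alpha> assume "\<beta> \<in> y" and "\<alpha> \<in> x"
    then show "rho n d x y \<le> unif_dist n d \<beta> \<alpha>"
      using rho_le_unif_dist[OF x y] unif_dist_commute by metis
  qed
  with assms show ?thesis
    by (meson order.antisym)
qed


lemma rho_le_add_unif_dist:
  assumes n: "0 < n" and a: "a \<in> homotopy_group_set n M d x0"
    and b: "b \<in> homotopy_group_set n M d x0" and c: "c \<in> homotopy_group_set n M d x0"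
    and "\<alpha> \<in> a" "\<beta> \<in> b" "\<beta>' \<in> b" "\<gamma> \<in> c"
  shows "rho n d a c \<le> unif_dist n d \<alpha> \<beta> + unif_dist n d \<beta>' \<gamma>"
proof -
  have \<Omega>: "\<alpha> \<in> Omega n M d x0" "\<beta> \<in> Omega n M d x0" "\<beta>' \<in> Omega n M d x0" "\<gamma> \<in> Omega n M d x0"
    using homotopy_class_subset_Omega[OF a] homotopy_class_subset_Omega[OF b]
      homotopy_class_subset_Omega[OF c] assms(5-8) by blast+
  then have \<Omega>_rev: "cube_reverse \<beta> \<in> Omega n M d x0"
    by (simp add: Omega_iff based_cube_map_reverse[OF n])
  define \<alpha>' where "\<alpha>' = cube_concat3 \<alpha> (cube_reverse \<beta>) \<beta>'"
  define \<gamma>' where "\<gamma>' = cube_concat3 \<beta> (cube_reverse \<beta>) \<gamma>"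
  have "homotopic_cubes n mtopology x0 \<alpha>' (cube_concat3 \<alpha> (cube_reverse \<beta>) \<beta>)"
    unfolding \<alpha>'_def using \<Omega> \<Omega>_rev homotopy_class_homotopic[OF b \<open>\<beta>' \<in> b\<close> \<open>\<beta> \<in> b\<close>]
    by (intro homotopic_cubes_concat3_cong[OF n]) (simp_all add: Omega_def)
  also have "homotopic_cubes n mtopology x0 \<dots> \<alpha>"
    using \<Omega> by (intro homotopic_cubes_concat3_reverse_right[OF n]) (simp_all add: Omega_iff)
  finally have "\<alpha>' \<in> a"
    using homotopy_class_closed[OF a \<open>\<alpha> \<in> a\<close>] by (simp add: homotopic_with_sym)
  have "homotopic_cubes n mtopology x0 \<gamma>' \<gamma>"
    unfolding \<gamma>'_def using \<Omega> by (intro homotopic_cubes_concat3_reverse_left[OF n]) (simp_all add: Omega_iff)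
  then have "\<gamma>' \<in> c"
    using homotopy_class_closed[OF c \<open>\<gamma> \<in> c\<close>] by (simp add: homotopic_with_sym)
  have "rho n d a c \<le> unif_dist n d \<alpha>' \<gamma>'"
    by (rule rho_le_unif_dist[OF a c \<open>\<alpha>' \<in> a\<close> \<open>\<gamma>' \<in> c\<close>])
  also have "\<dots> \<le> max (unif_dist n d \<alpha> \<beta>) (max (unif_dist n d (cube_reverse \<beta>) (cube_reverse \<beta>)) (unif_dist n d \<beta>' \<gamma>))"
    unfolding \<alpha>'_def \<gamma>'_def using \<Omega> \<Omega>_rev by (intro unif_dist_concat3_le[OF n])
  also have "\<dots> \<le> unif_dist n d \<alpha> \<beta> + unif_dist n d \<beta>' \<gamma>"
    using \<Omega> \<Omega>_rev by (simp add: unif_dist_self unif_dist_nonneg)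
  finally show ?thesis .
qed

lemma rho_triangle:
  assumes n: "0 < n" and a: "a \<in> homotopy_group_set n M d x0"
    and b: "b \<in> homotopy_group_set n M d x0" and c: "c \<in> homotopy_group_set n M d x0"
  shows "rho n d a c \<le> rho n d a b + rho n d b c"
proof -
  have *: "rho n d a c - unif_dist n d \<beta>' \<gamma> \<le> rho n d a b" if "\<beta>' \<in> b" and "\<gamma> \<in> c" for \<beta>' \<gamma>
  proof (rule le_rho[OF a b])
    fix \<alpha> \<beta> assume "\<alpha> \<in> a" and "\<beta> \<in> b"
    from rho_le_add_unif_dist[OF n a b c this that] show "rho n d a c - unif_dist n d \<beta>' \<gamma> \<le> unif_dist n d \<alpha> \<beta>"
      by simp
  qed
  have "rho n d a c - rho n d a b \<le> rho n d b c"
  proof (rule le_rho[OF b c])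
    fix \<beta>' \<gamma> assume "\<beta>' \<in> b" and "\<gamma> \<in> c"
    from *[OF this] show "rho n d a c - rho n d a b \<le> unif_dist n d \<beta>' \<gamma>"
      by simp
  qed
  then show ?thesis
    by simp
qed

end

theorem theorem4p5:
  fixes M :: "'a set" and d :: "'a \<Rightarrow> 'a \<Rightarrow> real" and x0 :: 'a and n :: nat
  assumes "Metric_space M d" and "x0 \<in> M" and "n \<ge> 1"
  shows "pseudometric_on (homotopy_group_set n M d x0) (rho n d)"
proof -
  interpret Metric_space M d
    by (fact assms(1))
  have "0 < n"
    using assms(3) by simp
  then show ?thesis
    unfolding pseudometric_on_def using rho_nonneg rho_self rho_commute rho_triangle by blast
qed

end
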